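(* There is a universal constant $c>0$ such that the following holds. Let $\gamma \in (0, 1/6]$, let $n \geq 2$ be an integer, and let $\eta \geq \eta_1 := \max\{n, \frac{32}{\gamma^2}\log(3/\gamma)\}$. Then there exist a dimension $d$ and a dataset $x_1,\dots,x_n\in\mathbb{R}^d$ with $\|x_i\| \le 1$ for all $i$, linearly separable with maximum margin exactly $\gamma$, such that gradient descent with step size $\eta$ on this dataset has transition time $\tau := \min\{t \geq 0 : F(w_t) \leq 1/(8\eta)\}$ satisfying $\tau \geq c\left(\frac{n}{\gamma} + \frac{1}{\gamma^2}\right)$.
   Context: All labels are $+1$. Linear separability: some $w$ has $\langle w,x_i\rangle>0$ for all $i$. Maximum margin: $\max_{\|w\|=1}\min_i\langle w,x_i\rangle$. Loss $F(w) = \frac{1}{n}\sum_{i=1}^n \log(1+\exp(-\langle w, x_i\rangle))$. Gradient descent with constant step size $\eta$: $w_0 = 0$, $w_{t+1} = w_t - \eta\nabla F(w_t)$. *)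

theory Defs
  imports "HOL-Analysis.Analysis"
begin

text \<open>Vectors in R^d are represented as functions nat => real, only coordinates j < d matter.
  A dataset x_1..x_n is a function x :: nat => (nat => real), indices i < n (0-based).\<close>

definition ip :: "nat \<Rightarrow> (nat \<Rightarrow> real) \<Rightarrow> (nat \<Rightarrow> real) \<Rightarrow> real" where
  "ip d u v = (\<Sum>j<d. u j * v j)"

definition vnorm :: "nat \<Rightarrow> (nat \<Rightarrow> real) \<Rightarrow> real" where
  "vnorm d u = sqrt (ip d u u)"

definition logloss :: "nat \<Rightarrow> nat \<Rightarrow> (nat \<Rightarrow> nat \<Rightarrow> real) \<Rightarrow> (nat \<Rightarrow> real) \<Rightarrow> real" where
  "logloss d n x w = (1 / real n) * (\<Sum>i<n. ln (1 + exp (- ip d w (x i))))"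

definition loss_grad :: "nat \<Rightarrow> nat \<Rightarrow> (nat \<Rightarrow> nat \<Rightarrow> real) \<Rightarrow> (nat \<Rightarrow> real) \<Rightarrow> (nat \<Rightarrow> real)" where
  "loss_grad d n x w = (\<lambda>j. if j < d then
      (1 / real n) * (\<Sum>i<n. - x i j / (1 + exp (ip d w (x i)))) else 0)"

fun gd :: "nat \<Rightarrow> nat \<Rightarrow> (nat \<Rightarrow> nat \<Rightarrow> real) \<Rightarrow> real \<Rightarrow> nat \<Rightarrow> (nat \<Rightarrow> real)" where
  "gd d n x \<eta> 0 = (\<lambda>j. 0)"
| "gd d n x \<eta> (Suc t) = (\<lambda>j. gd d n x \<eta> t j - \<eta> * loss_grad d n x (gd d n x \<eta> t) j)"

text \<open>Linear separability with all labels +1.\<close>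
definition lin_sep :: "nat \<Rightarrow> nat \<Rightarrow> (nat \<Rightarrow> nat \<Rightarrow> real) \<Rightarrow> bool" where
  "lin_sep d n x = (\<exists>w. \<forall>i<n. ip d w (x i) > 0)"

definition max_margin :: "nat \<Rightarrow> nat \<Rightarrow> (nat \<Rightarrow> nat \<Rightarrow> real) \<Rightarrow> real" where
  "max_margin d n x = (SUP w\<in>{w. vnorm d w = 1}. Min ((\<lambda>i. ip d w (x i)) ` {..<n}))"

end

theory Submission
  imports Defs
begin

text \<open>
  Both hard datasets are two clusters in the plane, \<open>m\<close> copies of \<open>a = (\<gamma>, \<alpha>)\<close> and \<open>n - m\<close>
  copies of \<open>b = (\<gamma>, -\<beta>)\<close> with \<open>\<alpha>, \<beta> > 0\<close>; their maximum margin is \<open>\<gamma>\<close>, attained at \<open>e\<^sub>1\<close>.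
  Gradient descent from \<open>0\<close> stays in the span of the data,
  \<open>w\<^sub>t = \<eta> (m/n A\<^sub>t a + (n-m)/n B\<^sub>t b)\<close>, where \<open>A\<^sub>t, B\<^sub>t \<le> t\<close> accumulate the logistic weights
  of the two clusters, and \<open>F(w\<^sub>t) \<le> 1/(8\<eta>) \<le> 1/(8n)\<close> forces every margin to be positive.

  If \<open>n\<gamma> \<ge> 1\<close>, take one outlier \<open>b = (\<gamma>, -\<gamma>)\<close> against \<open>n - 1\<close> copies of \<open>a = (\<gamma>, 1/2)\<close>:
  the outlier's margin is \<open>\<eta>/n ((n-1) A\<^sub>t (\<gamma>\<^sup>2 - \<gamma>/2) + 2\<gamma>\<^sup>2 B\<^sub>t)\<close>, which stays negative until
  \<open>t \<ge> B\<^sub>t\<close> is of order \<open>n/\<gamma>\<close>.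

  If \<open>n\<gamma> < 1\<close>, take balanced clusters with \<open>m\<alpha> = n/4\<close> and \<open>(n-m)\<beta> = n/8\<close>. The margins
  become \<open>\<eta>(\<gamma>\<^sup>2 W\<^sub>t + \<alpha> U\<^sub>t)\<close> and \<open>\<eta>(\<gamma>\<^sup>2 W\<^sub>t - \<beta> U\<^sub>t)\<close> with \<open>0 \<le> W\<^sub>t \<le> t\<close> and the imbalance
  \<open>U\<^sub>t = A\<^sub>t/4 - B\<^sub>t/8\<close>. While \<open>\<gamma>\<^sup>2 t \<le> 1/256\<close> the sign of \<open>U\<^sub>t\<close> decides which cluster is
  misclassified; that cluster gets logistic weight almost 1 and the other almost 0 (here
  \<open>\<eta> \<ge> 32/\<gamma>\<^sup>2\<close> is used), so \<open>U\<^sub>t\<close> moves by about \<open>+1/4\<close> or \<open>-1/8\<close> and stays near an odd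
  multiple of \<open>1/16\<close>, never near \<open>0\<close>. Hence some margin is negative until \<open>t > 1/(256\<gamma>\<^sup>2)\<close>.
\<close>

text \<open>\<open>-\<ell>'(z)\<close> for the logistic loss \<open>\<ell>(z) = ln (1 + exp (-z))\<close>.\<close>
definition logistic_weight :: "real \<Rightarrow> real" where
  "logistic_weight z = 1 / (1 + exp z)"

lemma logistic_weight_pos: "0 < logistic_weight z"
  unfolding logistic_weight_def by (simp add: add_pos_pos)

lemma logistic_weight_le_one: "logistic_weight z \<le> 1"
  unfolding logistic_weight_def by (simp add: add_pos_pos)

lemma logistic_weight_zero [simp]: "logistic_weight 0 = 1/2"
  unfolding logistic_weight_def by simp

lemma one_minus_logistic_weight: "1 - logistic_weight z = logistic_weight (- z)"
proof -
  have "1 + exp z \<noteq> 0"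
    by (metis add_pos_pos exp_gt_zero less_irrefl zero_less_one)
  then show ?thesis
    unfolding logistic_weight_def exp_minus by (simp add: field_simps)
qed

lemma logistic_weight_le_inverse:
  assumes "0 < K" "K \<le> z"
  shows "logistic_weight z \<le> 1 / K"
proof -
  have "K \<le> 1 + exp z"
    using exp_ge_add_one_self[of z] assms by linarith
  then show ?thesis
    unfolding logistic_weight_def using assms by (simp add: frac_le)
qed

definition cum_weight ::
    "nat \<Rightarrow> nat \<Rightarrow> (nat \<Rightarrow> nat \<Rightarrow> real) \<Rightarrow> real \<Rightarrow> (nat \<Rightarrow> real) \<Rightarrow> nat \<Rightarrow> real" where
  "cum_weight d n x \<eta> z t = (\<Sum>k<t. logistic_weight (ip d (gd d n x \<eta> k) z))"

lemma cum_weight_0 [simp]: "cum_weight d n x \<eta> z 0 = 0"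
  by (simp add: cum_weight_def)

lemma cum_weight_Suc:
  "cum_weight d n x \<eta> z (Suc t) = cum_weight d n x \<eta> z t + logistic_weight (ip d (gd d n x \<eta> t) z)"
  by (simp add: cum_weight_def)

lemma cum_weight_nonneg: "0 \<le> cum_weight d n x \<eta> z t"
  unfolding cum_weight_def by (intro sum_nonneg) (simp add: logistic_weight_pos less_imp_le)

lemma cum_weight_le: "cum_weight d n x \<eta> z t \<le> t"
  using sum_mono[of "{..<t}" "\<lambda>k. logistic_weight (ip d (gd d n x \<eta> k) z)" "\<lambda>_. 1"]
  by (simp add: cum_weight_def logistic_weight_le_one)

lemma cum_weight_ge_half:
  assumes "1 \<le> t"
  shows "1/2 \<le> cum_weight d n x \<eta> z t"
proof -
  have "cum_weight d n x \<eta> z 1 \<le> cum_weight d n x \<eta> z t"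
    unfolding cum_weight_def using assms
    by (intro sum_mono2) (auto simp: logistic_weight_pos less_imp_le)
  then show ?thesis
    by (simp add: cum_weight_def ip_def)
qed

lemma loss_grad_eq_weighted_sum:
  "j < d \<Longrightarrow>
    loss_grad d n x w j = - (1 / real n) * (\<Sum>i<n. logistic_weight (ip d w (x i)) * x i j)"
  by (simp add: loss_grad_def logistic_weight_def sum_negf)

lemma gd_eq_weighted_sum:
  "j < d \<Longrightarrow> gd d n x \<eta> t j = \<eta> / real n * (\<Sum>i<n. cum_weight d n x \<eta> (x i) t * x i j)"
proof (induction t)
  case 0
  then show ?case by simp
next
  case (Suc t)
  let ?w = "gd d n x \<eta> t"
  have "gd d n x \<eta> (Suc t) j = \<eta> / real n * (\<Sum>i<n. cum_weight d n x \<eta> (x i) t * x i j)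
      + \<eta> / real n * (\<Sum>i<n. logistic_weight (ip d ?w (x i)) * x i j)"
    using Suc by (simp add: loss_grad_eq_weighted_sum)
  also have "\<dots> = \<eta> / real n * (\<Sum>i<n. cum_weight d n x \<eta> (x i) (Suc t) * x i j)"
    by (simp add: cum_weight_Suc sum.distrib ring_distribs)
  finally show ?case .
qed

lemma ip_gd_eq_weighted_sum:
  "ip d (gd d n x \<eta> t) z = \<eta> / real n * (\<Sum>i<n. cum_weight d n x \<eta> (x i) t * ip d (x i) z)"
proof -
  let ?C = "\<lambda>i. cum_weight d n x \<eta> (x i) t"
  have "ip d (gd d n x \<eta> t) z = \<eta> / real n * (\<Sum>j<d. \<Sum>i<n. ?C i * x i j * z j)"
    unfolding ip_def by (simp add: gd_eq_weighted_sum sum_distrib_left sum_distrib_right mult.assoc)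
  also have "\<dots> = \<eta> / real n * (\<Sum>i<n. ?C i * ip d (x i) z)"
    unfolding ip_def by (subst sum.swap) (simp add: sum_distrib_left mult.assoc)
  finally show ?thesis .
qed

lemma ln2_div_le_logloss:
  assumes "i < n" "ip d w (x i) \<le> 0"
  shows "ln 2 / real n \<le> logloss d n x w"
proof -
  have "1 \<le> exp (- ip d w (x i))"
    using assms(2) by simp
  then have "ln 2 \<le> ln (1 + exp (- ip d w (x i)))"
    by (subst ln_le_cancel_iff) (simp_all add: add_pos_pos)
  also have "\<dots> \<le> (\<Sum>i<n. ln (1 + exp (- ip d w (x i))))"
    using assms(1) by (intro member_le_sum) auto
  finally show ?thesis
    unfolding logloss_def by (simp add: divide_right_mono)
qed

lemma margin_pos_if_logloss_le:
  assumes "real n \<le> \<eta>" "logloss d n x w \<le> 1 / (8 * \<eta>)" "i < n"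
  shows "0 < ip d w (x i)"
proof (rule ccontr)
  assume "\<not> 0 < ip d w (x i)"
  then have "ln 2 / real n \<le> 1 / (8 * \<eta>)"
    using ln2_div_le_logloss[OF assms(3), of d w x] assms(2) by linarith
  also have "\<dots> \<le> 1 / (8 * real n)"
    using assms(1,3) by (simp add: frac_le)
  finally show False
    using ln2_ge_two_thirds assms(3) by (simp add: field_simps)
qed

definition two_clusters :: "nat \<Rightarrow> (nat \<Rightarrow> real) \<Rightarrow> (nat \<Rightarrow> real) \<Rightarrow> nat \<Rightarrow> nat \<Rightarrow> real" where
  "two_clusters m a b = (\<lambda>i. if i < m then a else b)"

lemma sum_two_clusters:
  assumes "m \<le> n"
  shows "(\<Sum>i<n. f (two_clusters m a b i)) = real m * f a + real (n - m) * f b"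
proof -
  have "{..<n} = {..<m} \<union> {m..<n}"
    using assms by auto
  then have "(\<Sum>i<n. f (two_clusters m a b i))
      = (\<Sum>i<m. f (two_clusters m a b i)) + (\<Sum>i\<in>{m..<n}. f (two_clusters m a b i))"
    by (metis finite_atLeastLessThan finite_lessThan ivl_disj_int_one(2) sum.union_disjoint)
  also have "\<dots> = (\<Sum>i<m. f a) + (\<Sum>i\<in>{m..<n}. f b)"
    by (simp add: two_clusters_def)
  finally show ?thesis
    by simp
qed

lemma ip_gd_two_clusters:
  assumes "m \<le> n"
  shows "ip d (gd d n (two_clusters m a b) \<eta> t) z =
    \<eta> * (real m / real n * cum_weight d n (two_clusters m a b) \<eta> a t * ip d a z
      + real (n - m) / real n * cum_weight d n (two_clusters m a b) \<eta> b t * ip d b z)"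
  unfolding ip_gd_eq_weighted_sum sum_two_clusters[OF assms, where
      f = "\<lambda>y. cum_weight d n (two_clusters m a b) \<eta> y t * ip d y z"]
  by (cases "n = 0") (simp_all add: field_simps)

definition vec2 :: "real \<Rightarrow> real \<Rightarrow> nat \<Rightarrow> real" where
  "vec2 u v = (\<lambda>j. if j = 0 then u else if j = 1 then v else 0)"

lemma vec2_0 [simp]: "vec2 u v 0 = u"
  and vec2_1 [simp]: "vec2 u v 1 = v" "vec2 u v (Suc 0) = v"
  by (simp_all add: vec2_def)

lemma ip_dim2: "ip 2 w z = w 0 * z 0 + w 1 * z 1"
  by (simp add: ip_def eval_nat_numeral)

lemma vnorm_vec2: "vnorm 2 (vec2 u v) = sqrt (u\<^sup>2 + v\<^sup>2)"
  by (simp add: vnorm_def ip_dim2 power2_eq_square)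

lemma margins_two_clusters:
  fixes m n t :: nat and \<gamma> \<alpha> \<beta> \<eta> :: real and x :: "nat \<Rightarrow> nat \<Rightarrow> real"
  defines "p \<equiv> real m / real n" and "q \<equiv> real (n - m) / real n"
    and "A \<equiv> cum_weight 2 n x \<eta> (vec2 \<gamma> \<alpha>) t"
    and "B \<equiv> cum_weight 2 n x \<eta> (vec2 \<gamma> (- \<beta>)) t"
  assumes "m \<le> n" and x: "x = two_clusters m (vec2 \<gamma> \<alpha>) (vec2 \<gamma> (- \<beta>))"
  shows "ip 2 (gd 2 n x \<eta> t) (vec2 \<gamma> \<alpha>) =
      \<eta> * (\<gamma>\<^sup>2 * (p * A + q * B) + \<alpha> * (p * \<alpha> * A - q * \<beta> * B))"
    and "ip 2 (gd 2 n x \<eta> t) (vec2 \<gamma> (- \<beta>)) =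
      \<eta> * (\<gamma>\<^sup>2 * (p * A + q * B) - \<beta> * (p * \<alpha> * A - q * \<beta> * B))"
  unfolding A_def B_def x ip_gd_two_clusters[OF assms(5)] p_def[symmetric] q_def[symmetric]
  by (simp_all add: ip_dim2 algebra_simps power2_eq_square)

lemma vnorm_two_clusters_le_one:
  assumes "\<gamma>\<^sup>2 + \<alpha>\<^sup>2 \<le> 1" "\<gamma>\<^sup>2 + \<beta>\<^sup>2 \<le> 1"
  shows "vnorm 2 (two_clusters m (vec2 \<gamma> \<alpha>) (vec2 \<gamma> (- \<beta>)) i) \<le> 1"
  using assms by (simp add: two_clusters_def vnorm_vec2)

lemma lin_sep_two_clusters:
  assumes "0 < \<gamma>"
  shows "lin_sep 2 n (two_clusters m (vec2 \<gamma> \<alpha>) (vec2 \<gamma> \<beta>))"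
  unfolding lin_sep_def
  by (rule exI[of _ "vec2 1 0"]) (simp add: two_clusters_def ip_dim2 assms)

lemma max_margin_two_clusters:
  assumes "0 < m" "m < n" "0 \<le> \<gamma>" "0 < \<alpha>" "0 < \<beta>"
  shows "max_margin 2 n (two_clusters m (vec2 \<gamma> \<alpha>) (vec2 \<gamma> (- \<beta>))) = \<gamma>"
proof -
  let ?a = "vec2 \<gamma> \<alpha>" and ?b = "vec2 \<gamma> (- \<beta>)"
  let ?x = "two_clusters m ?a ?b"
  have image: "(\<lambda>i. ip 2 w (?x i)) ` {..<n} = {ip 2 w ?a, ip 2 w ?b}" for w
  proof
    show "(\<lambda>i. ip 2 w (?x i)) ` {..<n} \<subseteq> {ip 2 w ?a, ip 2 w ?b}"
      by (auto simp: two_clusters_def)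
    have "ip 2 w ?a \<in> (\<lambda>i. ip 2 w (?x i)) ` {..<n}"
      by (rule image_eqI[of _ _ 0]) (use assms(1,2) in \<open>simp_all add: two_clusters_def\<close>)
    moreover have "ip 2 w ?b \<in> (\<lambda>i. ip 2 w (?x i)) ` {..<n}"
      by (rule image_eqI[of _ _ m]) (use assms(2) in \<open>simp_all add: two_clusters_def\<close>)
    ultimately show "{ip 2 w ?a, ip 2 w ?b} \<subseteq> (\<lambda>i. ip 2 w (?x i)) ` {..<n}"
      by simp
  qed
  have bounded: "min (ip 2 w ?a) (ip 2 w ?b) \<le> \<gamma>" if "vnorm 2 w = 1" for w
  proof -
    have "(w 0)\<^sup>2 + (w 1)\<^sup>2 = 1"
      using that by (simp add: vnorm_def ip_dim2 power2_eq_square)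
    then have "(w 0)\<^sup>2 \<le> 1"
      using zero_le_power2[of "w 1"] by linarith
    then have "w 0 \<le> 1"
      unfolding abs_square_le_1 by simp
    then have "(\<alpha> + \<beta>) * (\<gamma> * w 0) \<le> (\<alpha> + \<beta>) * \<gamma>"
      using assms(3-5) by (simp add: mult_left_le)
    moreover have "(\<alpha> + \<beta>) * min (ip 2 w ?a) (ip 2 w ?b) \<le> \<beta> * ip 2 w ?a + \<alpha> * ip 2 w ?b"
    proof -
      have "\<beta> * min (ip 2 w ?a) (ip 2 w ?b) \<le> \<beta> * ip 2 w ?a"
        "\<alpha> * min (ip 2 w ?a) (ip 2 w ?b) \<le> \<alpha> * ip 2 w ?b"
        using assms(4,5) by (simp_all add: mult_left_mono)
      then show ?thesis
        by (simp add: distrib_right)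
    qed
    moreover have "\<beta> * ip 2 w ?a + \<alpha> * ip 2 w ?b = (\<alpha> + \<beta>) * (\<gamma> * w 0)"
      by (simp add: ip_dim2 algebra_simps)
    ultimately show ?thesis
      using assms(4,5) by (simp add: mult_le_cancel_left_pos)
  qed
  have attained: "vnorm 2 (vec2 1 0) = 1" "min (ip 2 (vec2 1 0) ?a) (ip 2 (vec2 1 0) ?b) = \<gamma>"
    by (simp_all add: vnorm_vec2 ip_dim2)
  have Min_pair: "Min {u, v} = min u v" for u v :: real
    by simp
  show ?thesis
    unfolding max_margin_def image Min_pair
  proof (rule cSup_eq_maximum)
    show "\<gamma> \<in> (\<lambda>w. min (ip 2 w ?a) (ip 2 w ?b)) ` {w. vnorm 2 w = 1}"
      using attained by (intro image_eqI[of _ _ "vec2 1 0"]) auto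
    show "y \<le> \<gamma>" if "y \<in> (\<lambda>w. min (ip 2 w ?a) (ip 2 w ?b)) ` {w. vnorm 2 w = 1}" for y
      using that bounded by auto
  qed
qed

lemma transition_time_one_outlier:
  fixes n t :: nat and \<gamma> \<eta> :: real
  defines "x \<equiv> two_clusters (n - 1) (vec2 \<gamma> (1/2)) (vec2 \<gamma> (- \<gamma>))"
  assumes n: "2 \<le> n" and \<gamma>: "0 < \<gamma>" "\<gamma> \<le> 1/6" and \<eta>: "real n \<le> \<eta>"
    and loss: "logloss 2 n x (gd 2 n x \<eta> t) \<le> 1 / (8 * \<eta>)"
  shows "real n < 24 * \<gamma> * real t"
proof -
  define p where "p = real (n - 1) / real n"
  define q where "q = real (n - (n - 1)) / real n"
  define A where "A = cum_weight 2 n x \<eta> (vec2 \<gamma> (1/2)) t"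
  define B where "B = cum_weight 2 n x \<eta> (vec2 \<gamma> (- \<gamma>)) t"
  have p: "1/2 \<le> p" and q: "q = 1 / real n"
    using n by (simp_all add: p_def q_def of_nat_diff field_simps)
  have "x (n - 1) = vec2 \<gamma> (- \<gamma>)"
    by (simp add: x_def two_clusters_def)
  then have "0 < ip 2 (gd 2 n x \<eta> t) (vec2 \<gamma> (- \<gamma>))"
    using margin_pos_if_logloss_le[OF \<eta> loss, of "n - 1"] n by simp
  also have "\<dots> = \<eta> * (\<gamma>\<^sup>2 * (p * A + q * B) - \<gamma> * (p * (1/2) * A - q * \<gamma> * B))"
    using margins_two_clusters(2)[of "n - 1" n x \<gamma> "1/2" \<gamma> \<eta> t] n
    by (simp add: x_def A_def B_def p_def q_def)
  also have "\<dots> = \<eta> * (2 * q * \<gamma>\<^sup>2 * B - p * A * (\<gamma> / 2 - \<gamma>\<^sup>2))"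
    by (simp add: algebra_simps power2_eq_square)
  finally have margin: "p * A * (\<gamma> / 2 - \<gamma>\<^sup>2) < 2 * q * \<gamma>\<^sup>2 * B"
    using \<eta> n by (simp add: zero_less_mult_iff)
  have "t \<noteq> 0"
  proof
    assume "t = 0"
    with margin show False
      by (simp add: A_def B_def)
  qed
  then have "1/2 \<le> A"
    unfolding A_def by (intro cum_weight_ge_half) simp
  then have "(1/2) * (1/2) \<le> p * A"
    using p by (intro mult_mono) auto
  moreover have "\<gamma> * \<gamma> \<le> \<gamma> * (1/6)"
    using \<gamma> by (intro mult_left_mono) auto
  then have "\<gamma> / 3 \<le> \<gamma> / 2 - \<gamma>\<^sup>2"
    unfolding power2_eq_square by linarith
  ultimately have "(1/4) * (\<gamma> / 3) \<le> p * A * (\<gamma> / 2 - \<gamma>\<^sup>2)"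
    using \<gamma> by (intro mult_mono) auto
  moreover have "2 * q * \<gamma>\<^sup>2 * B \<le> 2 * q * \<gamma>\<^sup>2 * real t"
    unfolding B_def using q by (intro mult_left_mono cum_weight_le) simp
  ultimately have "\<gamma> / 12 < 2 * \<gamma>\<^sup>2 * real t / real n"
    using margin q by simp
  then show ?thesis
    using n \<gamma> by (simp add: field_simps power2_eq_square)
qed

lemma opposite_margins:
  fixes k :: int and \<alpha> \<beta> G U :: real
  assumes \<alpha>: "1/3 \<le> \<alpha>" and \<beta>: "1/4 \<le> \<beta>" and G: "0 \<le> G" "G \<le> 1/256"
    and U: "\<bar>U - (k / 8 + 1/16)\<bar> \<le> 1/32"
  shows "0 \<le> k \<Longrightarrow> 1/256 \<le> G + \<alpha> * U \<and> G - \<beta> * U \<le> -1/256"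
    and "k < 0 \<Longrightarrow> G + \<alpha> * U \<le> -1/256 \<and> 1/256 \<le> G - \<beta> * U"
proof -
  assume "0 \<le> k"
  then have "0 \<le> real_of_int k"
    by simp
  then have "1/32 \<le> U"
    using abs_le_D2[OF U] by linarith
  then have "(1/3) * (1/32) \<le> \<alpha> * U" "(1/4) * (1/32) \<le> \<beta> * U"
    using \<alpha> \<beta> by (intro mult_mono; simp)+
  then show "1/256 \<le> G + \<alpha> * U \<and> G - \<beta> * U \<le> -1/256"
    using G by simp
next
  assume "k < 0"
  then have "real_of_int k \<le> -1"
    by simp
  then have "U \<le> - 1/32"
    using abs_le_D1[OF U] by linarith
  then have "(1/3) * (1/32) \<le> \<alpha> * - U" "(1/4) * (1/32) \<le> \<beta> * - U"
    using \<alpha> \<beta> by (intro mult_mono; simp)+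
  then show "G + \<alpha> * U \<le> -1/256 \<and> 1/256 \<le> G - \<beta> * U"
    using G by simp
qed

context
  fixes n m :: nat and \<gamma> \<alpha> \<beta> \<eta> :: real and x :: "nat \<Rightarrow> nat \<Rightarrow> real"
  assumes m: "0 < m" "m < n"
    and \<alpha>: "1/3 \<le> \<alpha>" "real m * \<alpha> = real n / 4"
    and \<beta>: "1/4 \<le> \<beta>" "real (n - m) * \<beta> = real n / 8"
    and \<gamma>: "0 < \<gamma>" and \<eta>: "32 / \<gamma>\<^sup>2 \<le> \<eta>"
    and x: "x = two_clusters m (vec2 \<gamma> \<alpha>) (vec2 \<gamma> (- \<beta>))"
begin

abbreviation "cum_a t \<equiv> cum_weight 2 n x \<eta> (vec2 \<gamma> \<alpha>) t"
abbreviation "cum_b t \<equiv> cum_weight 2 n x \<eta> (vec2 \<gamma> (- \<beta>)) t"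
abbreviation "imbalance t \<equiv> cum_a t / 4 - cum_b t / 8"
abbreviation "mean_weight t \<equiv> real m / real n * cum_a t + real (n - m) / real n * cum_b t"

lemma step_size_pos: "0 < \<eta>"
proof -
  have "0 < 32 / \<gamma>\<^sup>2"
    using \<gamma> by simp
  then show ?thesis
    using \<eta> by linarith
qed

lemma margins_balanced:
  shows "ip 2 (gd 2 n x \<eta> t) (vec2 \<gamma> \<alpha>) = \<eta> * (\<gamma>\<^sup>2 * mean_weight t + \<alpha> * imbalance t)"
    and "ip 2 (gd 2 n x \<eta> t) (vec2 \<gamma> (- \<beta>)) = \<eta> * (\<gamma>\<^sup>2 * mean_weight t - \<beta> * imbalance t)"
proof -
  have "real m / real n * \<alpha> = 1/4" "real (n - m) / real n * \<beta> = 1/8"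
    using \<alpha>(2) \<beta>(2) m by (simp_all add: field_simps)
  note margins = margins_two_clusters[of m n x \<gamma> \<alpha> \<beta> \<eta> t, unfolded this]
  show "ip 2 (gd 2 n x \<eta> t) (vec2 \<gamma> \<alpha>) = \<eta> * (\<gamma>\<^sup>2 * mean_weight t + \<alpha> * imbalance t)"
    using margins(1) m x by simp
  show "ip 2 (gd 2 n x \<eta> t) (vec2 \<gamma> (- \<beta>)) = \<eta> * (\<gamma>\<^sup>2 * mean_weight t - \<beta> * imbalance t)"
    using margins(2) m x by simp
qed

lemma mean_weight_bounds: "0 \<le> mean_weight t" "mean_weight t \<le> t"
proof -
  have "mean_weight t \<le> real m / real n * t + real (n - m) / real n * t"
    by (intro add_mono mult_left_mono cum_weight_le; simp)+
  also have "\<dots> = (real m / real n + real (n - m) / real n) * t"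
    by (simp add: distrib_right)
  also have "\<dots> = t"
    using m by (simp add: of_nat_diff field_simps)
  finally show "mean_weight t \<le> t" .
  show "0 \<le> mean_weight t"
    by (simp add: cum_weight_nonneg)
qed

lemma logistic_weight_le_if_margin_ge:
  assumes "1/256 \<le> X"
  shows "logistic_weight (\<eta> * X) \<le> 256 / \<eta>"
proof -
  have "\<eta> * (1/256) \<le> \<eta> * X"
    using assms step_size_pos by (intro mult_left_mono) auto
  then show ?thesis
    using logistic_weight_le_inverse[of "\<eta> / 256" "\<eta> * X"] step_size_pos by simp
qed

lemma scaled_mean_weight_bounds:
  assumes "\<gamma>\<^sup>2 * t \<le> 1/256"
  shows "0 \<le> \<gamma>\<^sup>2 * mean_weight t" "\<gamma>\<^sup>2 * mean_weight t \<le> 1/256"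
proof -
  have "\<gamma>\<^sup>2 * mean_weight t \<le> \<gamma>\<^sup>2 * t"
    by (intro mult_left_mono mean_weight_bounds) simp
  then show "\<gamma>\<^sup>2 * mean_weight t \<le> 1/256"
    using assms by linarith
  show "0 \<le> \<gamma>\<^sup>2 * mean_weight t"
    by (intro mult_nonneg_nonneg mean_weight_bounds) simp
qed

lemma accumulated_error_small:
  fixes t :: nat
  assumes "\<gamma>\<^sup>2 * t \<le> 1/256"
  shows "256 * real t / \<eta> \<le> 1/32"
proof -
  have "256 / \<eta> \<le> 8 * \<gamma>\<^sup>2"
    using \<eta> step_size_pos \<gamma> by (simp add: field_simps)
  then have "256 / \<eta> * t \<le> 8 * \<gamma>\<^sup>2 * t"
    by (intro mult_right_mono) auto
  then show ?thesis
    using assms by simp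
qed

lemma imbalance_step:
  fixes k :: int
  assumes t: "\<gamma>\<^sup>2 * t \<le> 1/256" and k: "\<bar>imbalance t - (k / 8 + 1/16)\<bar> \<le> e" and e: "e \<le> 1/32"
  shows "\<exists>k'::int. \<bar>imbalance (Suc t) - (k' / 8 + 1/16)\<bar> \<le> e + 256 / \<eta>"
proof -
  define G where "G = \<gamma>\<^sup>2 * mean_weight t"
  define U where "U = imbalance t"
  define la where "la = logistic_weight (\<eta> * (G + \<alpha> * U))"
  define lb where "lb = logistic_weight (\<eta> * (G - \<beta> * U))"
  have G: "0 \<le> G" "G \<le> 1/256"
    unfolding G_def using scaled_mean_weight_bounds[OF t] .
  have "\<bar>U - (k / 8 + 1/16)\<bar> \<le> 1/32"
    using k e by (simp add: U_def)
  note signs = opposite_margins[OF \<alpha>(1) \<beta>(1) G this]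
  have Suc: "imbalance (Suc t) = U + la / 4 - lb / 8"
    unfolding U_def la_def lb_def G_def by (simp add: cum_weight_Suc margins_balanced add_divide_distrib)
  have weights: "0 \<le> la" "la \<le> 1" "0 \<le> lb" "lb \<le> 1"
    unfolding la_def lb_def by (simp_all add: logistic_weight_pos less_imp_le logistic_weight_le_one)
  have "0 < 256 / \<eta>"
    using step_size_pos by simp
  have flip_a: "1 - la = logistic_weight (\<eta> * - (G + \<alpha> * U))"
    and flip_b: "1 - lb = logistic_weight (\<eta> * - (G - \<beta> * U))"
    unfolding la_def lb_def one_minus_logistic_weight by (simp_all add: algebra_simps)
  show ?thesis
  proof (cases "0 \<le> k")
    case True
    then have "la \<le> 256 / \<eta>" "1 - lb \<le> 256 / \<eta>"
      using signs(1) unfolding la_def flip_b by (simp_all add: logistic_weight_le_if_margin_ge)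
    then show ?thesis
      using k weights Suc \<open>0 < 256 / \<eta>\<close>
      by (intro exI[of _ "k - 1"]) (auto simp: U_def abs_le_iff diff_divide_distrib add_divide_distrib)
  next
    case False
    then have "1 - la \<le> 256 / \<eta>" "lb \<le> 256 / \<eta>"
      using signs(2) unfolding lb_def flip_a by (simp_all add: logistic_weight_le_if_margin_ge)
    then show ?thesis
      using k weights Suc \<open>0 < 256 / \<eta>\<close>
      by (intro exI[of _ "k + 2"]) (auto simp: U_def abs_le_iff diff_divide_distrib add_divide_distrib)
  qed
qed

lemma imbalance_near_odd_multiple:
  assumes "1 \<le> t" "\<gamma>\<^sup>2 * t \<le> 1/256"
  shows "\<exists>k::int. \<bar>imbalance t - (k / 8 + 1/16)\<bar> \<le> 256 * real t / \<eta>"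
  using assms
proof (induction t rule: nat_induct_at_least)
  case base
  show ?case
    using step_size_pos by (intro exI[of _ 0]) (simp add: cum_weight_def ip_def)
next
  case (Suc t)
  have "\<gamma>\<^sup>2 * t \<le> \<gamma>\<^sup>2 * Suc t"
    by (intro mult_left_mono) auto
  then have t: "\<gamma>\<^sup>2 * t \<le> 1/256"
    using Suc.prems by linarith
  then obtain k :: int where "\<bar>imbalance t - (k / 8 + 1/16)\<bar> \<le> 256 * real t / \<eta>"
    using Suc.IH by blast
  from imbalance_step[OF t this accumulated_error_small[OF t]]
  show ?case
    by (simp add: add_divide_distrib distrib_left add.commute)
qed

lemma margin_nonpos_before_transition:
  assumes "\<gamma>\<^sup>2 * t \<le> 1/256"
  shows "ip 2 (gd 2 n x \<eta> t) (vec2 \<gamma> \<alpha>) \<le> 0 \<or> ip 2 (gd 2 n x \<eta> t) (vec2 \<gamma> (- \<beta>)) \<le> 0"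
proof (cases "t = 0")
  case True
  then show ?thesis
    by (simp add: ip_def)
next
  case False
  then obtain k :: int where "\<bar>imbalance t - (k / 8 + 1/16)\<bar> \<le> 256 * real t / \<eta>"
    using imbalance_near_odd_multiple assms by force
  then have "\<bar>imbalance t - (k / 8 + 1/16)\<bar> \<le> 1/32"
    using accumulated_error_small[OF assms] by linarith
  note signs = opposite_margins[OF \<alpha>(1) \<beta>(1) scaled_mean_weight_bounds[OF assms] this]
  show ?thesis
    using signs step_size_pos unfolding margins_balanced
    by (cases "0 \<le> k") (auto simp: mult_nonneg_nonpos less_imp_le)
qed

lemma transition_time_balanced:
  assumes "real n \<le> \<eta>" "logloss 2 n x (gd 2 n x \<eta> t) \<le> 1 / (8 * \<eta>)"
  shows "1/256 < \<gamma>\<^sup>2 * t"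
proof (rule ccontr)
  assume "\<not> 1/256 < \<gamma>\<^sup>2 * t"
  then have "ip 2 (gd 2 n x \<eta> t) (x 0) \<le> 0 \<or> ip 2 (gd 2 n x \<eta> t) (x m) \<le> 0"
    using margin_nonpos_before_transition m x by (simp add: two_clusters_def)
  then show False
    using margin_pos_if_logloss_le[OF assms] m by fastforce
qed

end

definition slow_transition_instance ::
    "real \<Rightarrow> real \<Rightarrow> nat \<Rightarrow> real \<Rightarrow> nat \<Rightarrow> (nat \<Rightarrow> nat \<Rightarrow> real) \<Rightarrow> bool" where
  "slow_transition_instance c \<gamma> n \<eta> d x \<longleftrightarrow>
     (\<forall>i<n. vnorm d (x i) \<le> 1) \<and> lin_sep d n x \<and> max_margin d n x = \<gamma> \<and>
     (\<forall>t. logloss d n x (gd d n x \<eta> t) \<le> 1 / (8 * \<eta>) \<longrightarrow>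
        c * (real n / \<gamma> + 1 / \<gamma>\<^sup>2) \<le> real t)"

lemma slow_instance_one_outlier:
  fixes n :: nat and \<gamma> \<eta> :: real
  defines "x \<equiv> two_clusters (n - 1) (vec2 \<gamma> (1/2)) (vec2 \<gamma> (- \<gamma>))"
  assumes \<gamma>: "0 < \<gamma>" "\<gamma> \<le> 1/6" and n: "2 \<le> n" and \<eta>: "real n \<le> \<eta>"
    and many: "1 \<le> real n * \<gamma>"
  shows "slow_transition_instance (1/512) \<gamma> n \<eta> 2 x"
  unfolding slow_transition_instance_def
proof (intro conjI allI impI)
  have "\<gamma>\<^sup>2 \<le> (1/6)\<^sup>2"
    using \<gamma> by (intro power_mono) auto
  then show "vnorm 2 (x i) \<le> 1" for i
    unfolding x_def by (intro vnorm_two_clusters_le_one) (simp_all add: power2_eq_square)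
  show "lin_sep 2 n x"
    unfolding x_def using \<gamma>(1) by (rule lin_sep_two_clusters)
  show "max_margin 2 n x = \<gamma>"
    unfolding x_def using n \<gamma> by (intro max_margin_two_clusters) auto
  fix t
  assume "logloss 2 n x (gd 2 n x \<eta> t) \<le> 1 / (8 * \<eta>)"
  then have "real n < 24 * \<gamma> * real t"
    using transition_time_one_outlier[OF n \<gamma> \<eta>] unfolding x_def by blast
  then have "real n / \<gamma> < 24 * real t"
    using \<gamma> by (simp add: field_simps)
  moreover have "\<gamma> * 1 \<le> \<gamma> * (real n * \<gamma>)"
    using many \<gamma> by (intro mult_left_mono) auto
  then have "1 / \<gamma>\<^sup>2 \<le> real n / \<gamma>"
    using \<gamma> by (simp add: field_simps power2_eq_square)
  ultimately show "1/512 * (real n / \<gamma> + 1 / \<gamma>\<^sup>2) \<le> real t"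
    unfolding distrib_left by linarith
qed

lemma slow_instance_balanced:
  fixes n :: nat and \<gamma> \<eta> :: real
  defines "m \<equiv> n - n div 2"
  defines "\<alpha> \<equiv> real n / (4 * real m)" and "\<beta> \<equiv> real n / (8 * real (n div 2))"
  defines "x \<equiv> two_clusters m (vec2 \<gamma> \<alpha>) (vec2 \<gamma> (- \<beta>))"
  assumes \<gamma>: "0 < \<gamma>" "\<gamma> \<le> 1/6" and n: "2 \<le> n" and \<eta>: "real n \<le> \<eta>" "32 / \<gamma>\<^sup>2 \<le> \<eta>"
    and few: "real n * \<gamma> < 1"
  shows "slow_transition_instance (1/512) \<gamma> n \<eta> 2 x"
  unfolding slow_transition_instance_def
proof (intro conjI allI impI)
  have half: "2 * real (n div 2) \<le> real n" "real n \<le> 2 * real (n div 2) + 1" "1 \<le> n div 2"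
    using n by linarith+
  have m: "0 < m" "m < n" "n - m = n div 2" "real m = real n - real (n div 2)"
    using n half(3) by (auto simp: m_def)
  have \<alpha>: "1/3 \<le> \<alpha>" "\<alpha> \<le> 1/2" "real m * \<alpha> = real n / 4"
    using half m n by (simp_all add: \<alpha>_def field_simps)
  have \<beta>: "1/4 \<le> \<beta>" "\<beta> \<le> 1/2" "real (n - m) * \<beta> = real n / 8"
    using half m n by (simp_all add: \<beta>_def field_simps)
  have "\<gamma>\<^sup>2 \<le> (1/6)\<^sup>2" "\<alpha>\<^sup>2 \<le> (1/2)\<^sup>2" "\<beta>\<^sup>2 \<le> (1/2)\<^sup>2"
    using \<gamma> \<alpha> \<beta> by (intro power_mono; simp)+
  then show "vnorm 2 (x i) \<le> 1" for i
    unfolding x_def by (intro vnorm_two_clusters_le_one) (simp_all add: power2_eq_square)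
  show "lin_sep 2 n x"
    unfolding x_def using \<gamma>(1) by (rule lin_sep_two_clusters)
  show "max_margin 2 n x = \<gamma>"
    unfolding x_def using m(1,2) \<gamma>(1) \<alpha>(1) \<beta>(1) by (intro max_margin_two_clusters) simp_all
  fix t
  assume "logloss 2 n x (gd 2 n x \<eta> t) \<le> 1 / (8 * \<eta>)"
  then have "1/256 < \<gamma>\<^sup>2 * t"
    using transition_time_balanced[OF m(1,2) \<alpha>(1,3) \<beta>(1,3) \<gamma>(1) \<eta>(2) x_def[THEN meta_eq_to_obj_eq] \<eta>(1)] by blast
  then have "1 / \<gamma>\<^sup>2 < 256 * real t"
    using \<gamma> by (simp add: field_simps)
  moreover have "real n / \<gamma> \<le> 1 / \<gamma>\<^sup>2"
    using few \<gamma> by (simp add: field_simps power2_eq_square)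
  ultimately show "1/512 * (real n / \<gamma> + 1 / \<gamma>\<^sup>2) \<le> real t"
    unfolding distrib_left by linarith
qed

lemma slow_instance_exists:
  assumes "0 < \<gamma>" "\<gamma> \<le> 1/6" "2 \<le> n" "real n \<le> \<eta>" "32 / \<gamma>\<^sup>2 \<le> \<eta>"
  shows "\<exists>x. slow_transition_instance (1/512) \<gamma> n \<eta> 2 x"
proof (cases "1 \<le> real n * \<gamma>")
  case True
  then show ?thesis
    using slow_instance_one_outlier assms by blast
next
  case False
  then show ?thesis
    using slow_instance_balanced assms by force
qed

lemma inverse_square_le_of_ln_bound:
  fixes \<gamma> \<eta> :: real
  assumes "0 < \<gamma>" "\<gamma> \<le> 1/6" "32 / \<gamma>\<^sup>2 * ln (3 / \<gamma>) \<le> \<eta>"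
  shows "32 / \<gamma>\<^sup>2 \<le> \<eta>"
proof -
  have "18 \<le> 3 / \<gamma>"
    using assms(1,2) by (simp add: field_simps)
  then have "exp 1 \<le> 3 / \<gamma>"
    using exp_le by linarith
  then have "1 \<le> ln (3 / \<gamma>)"
    using assms(1) by (simp add: ln_ge_iff)
  then show ?thesis
    using assms(3) mult_left_mono[of 1 "ln (3 / \<gamma>)" "32 / \<gamma>\<^sup>2"] by simp
qed

theorem theorem10:
  "\<exists>c::real. c > 0 \<and>
     (\<forall>(\<gamma>::real) (n::nat) (\<eta>::real).
        0 < \<gamma> \<and> \<gamma> \<le> 1/6 \<and> n \<ge> 2 \<and>
        \<eta> \<ge> max (real n) (32 / \<gamma>^2 * ln (3 / \<gamma>)) \<longrightarrow>
        (\<exists>(d::nat) (x::nat \<Rightarrow> nat \<Rightarrow> real).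
           (\<forall>i<n. vnorm d (x i) \<le> 1) \<and>
           lin_sep d n x \<and>
           max_margin d n x = \<gamma> \<and>
           (\<forall>t::nat. logloss d n x (gd d n x \<eta> t) \<le> 1 / (8 * \<eta>) \<longrightarrow>
              real t \<ge> c * (real n / \<gamma> + 1 / \<gamma>^2))))"
proof (intro exI[of _ "1/512"] conjI allI impI)
  fix \<gamma> :: real and n :: nat and \<eta> :: real
  assume "0 < \<gamma> \<and> \<gamma> \<le> 1/6 \<and> n \<ge> 2 \<and> \<eta> \<ge> max (real n) (32 / \<gamma>^2 * ln (3 / \<gamma>))"
  then have "0 < \<gamma>" "\<gamma> \<le> 1/6" "2 \<le> n" "real n \<le> \<eta>" "32 / \<gamma>\<^sup>2 * ln (3 / \<gamma>) \<le> \<eta>"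
    by auto
  then obtain x where "slow_transition_instance (1/512) \<gamma> n \<eta> 2 x"
    using slow_instance_exists inverse_square_le_of_ln_bound by blast
  then show "\<exists>d x. (\<forall>i<n. vnorm d (x i) \<le> 1) \<and> lin_sep d n x \<and> max_margin d n x = \<gamma> \<and>
      (\<forall>t. logloss d n x (gd d n x \<eta> t) \<le> 1 / (8 * \<eta>) \<longrightarrow>
        1/512 * (real n / \<gamma> + 1 / \<gamma>\<^sup>2) \<le> real t)"
    unfolding slow_transition_instance_def by blast
qed simp

end
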